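(* Let $q=p^n$ with $p>2$ prime, $g\ge2$ with $\gcd(g,p)=1$, and $a,\alpha\in\mathbb{F}_q$, $\alpha\neq0$, such that $X: y^2=x^{2g+1}+a x^{g+1}+\alpha^g x$ is a (nonsingular) hyperelliptic curve of genus $g$. Let $\omega:(x,y)\mapsto(x,-y)$ be the hyperelliptic involution. Fix $\beta\in\overline{\mathbb{F}}_q$ with $\beta^2=\alpha$ (for odd $g$ we take $\beta^{g+1}=\alpha^{(g+1)/2}$). Then $\sigma:(x,y)\mapsto\left(\frac{\alpha}{x},\, y\frac{\beta^{g+1}}{x^{g+1}}\right)$ is a non-hyperelliptic involution of $X$, and: 1. If $g$ is odd, $X/\langle\sigma\rangle$ is given by $y^2=D_g(x,\alpha)+a$ and $X/\langle\omega\sigma\rangle$ is given by $y^2=(x^2-4\alpha)(D_g(x,\alpha)+a)$ (over $\mathbb{F}_q$). 2. If $g$ is even, $X/\langle\sigma\rangle$ is given by $y^2=(x+2\beta)(D_g(x,\alpha)+a)$ and $X/\langle\omega\sigma\rangle$ is given by $y^2=(x-2\beta)(D_g(x,\alpha)+a)$ (over $\mathbb{F}_q(\beta)$).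
   Context: For $m\ge1$ and $\alpha$ in a field, the Dickson polynomial $D_m(x,\alpha)=\sum_{i=0}^{\lfloor m/2\rfloor}\frac{m}{m-i}\binom{m-i}{i}(-\alpha)^i x^{m-2i}$ is the unique polynomial satisfying $D_m\!\left(u+\frac{\alpha}{u},\alpha\right)=u^m+\left(\frac{\alpha}{u}\right)^m$. "Is given by" means birationally equivalent to the stated curve. *)

theory Defs
  imports "HOL-Computational_Algebra.Polynomial" "HOL-Computational_Algebra.Primes"
    "HOL-Computational_Algebra.Squarefree"
begin

text \<open>Dickson polynomial D_m(x,alpha) = sum_{i=0}^{m div 2} m/(m-i) * binom(m-i,i) * (-alpha)^i * x^(m-2i).
  The coefficient m/(m-i)*binom(m-i,i) is a natural number, computed exactly in nat.\<close>
definition dickson :: "nat \<Rightarrow> 'k::field \<Rightarrow> 'k poly" where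
  "dickson m \<alpha> = (\<Sum>i\<le>m div 2.
      monom (of_nat ((m * ((m - i) choose i)) div (m - i)) * (- \<alpha>) ^ i) (m - 2 * i))"

definition hyp_poly :: "nat \<Rightarrow> 'k::field \<Rightarrow> 'k \<Rightarrow> 'k poly" where
  "hyp_poly g a \<alpha> = monom 1 (2 * g + 1) + monom a (g + 1) + monom (\<alpha> ^ g) 1"

definition field_emb :: "('k::field \<Rightarrow> 'L::field) \<Rightarrow> bool" where
  "field_emb \<iota> \<longleftrightarrow> (\<forall>a b. \<iota> (a + b) = \<iota> a + \<iota> b) \<and> (\<forall>a b. \<iota> (a * b) = \<iota> a * \<iota> b) \<and> \<iota> 1 = 1"

definition evalp :: "('k::field \<Rightarrow> 'L::field) \<Rightarrow> 'k poly \<Rightarrow> 'L \<Rightarrow> 'L" where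
  "evalp \<iota> P z = (\<Sum>i\<le>degree P. \<iota> (coeff P i) * z ^ i)"

definition transcendental_over :: "('k::field \<Rightarrow> 'L::field) \<Rightarrow> 'L \<Rightarrow> bool" where
  "transcendental_over \<iota> z \<longleftrightarrow> (\<forall>P. P \<noteq> 0 \<longrightarrow> evalp \<iota> P z \<noteq> 0)"

inductive_set gen_subfield :: "('k::field \<Rightarrow> 'L::field) \<Rightarrow> 'L set \<Rightarrow> 'L set"
  for \<iota> S where
  const: "\<iota> c \<in> gen_subfield \<iota> S"
| gen: "z \<in> S \<Longrightarrow> z \<in> gen_subfield \<iota> S"
| add: "z \<in> gen_subfield \<iota> S \<Longrightarrow> w \<in> gen_subfield \<iota> S \<Longrightarrow> z + w \<in> gen_subfield \<iota> S"
| mult: "z \<in> gen_subfield \<iota> S \<Longrightarrow> w \<in> gen_subfield \<iota> S \<Longrightarrow> z * w \<in> gen_subfield \<iota> S"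
| neg: "z \<in> gen_subfield \<iota> S \<Longrightarrow> - z \<in> gen_subfield \<iota> S"
| inv: "z \<in> gen_subfield \<iota> S \<Longrightarrow> inverse z \<in> gen_subfield \<iota> S"

text \<open>L, with elements x y, is the function field K(X) of the curve X: y^2 = f(x).\<close>
definition is_hyperell_ff :: "('k::field \<Rightarrow> 'L::field) \<Rightarrow> 'k poly \<Rightarrow> 'L \<Rightarrow> 'L \<Rightarrow> bool" where
  "is_hyperell_ff \<iota> f x y \<longleftrightarrow> field_emb \<iota> \<and> transcendental_over \<iota> x \<and> y ^ 2 = evalp \<iota> f x
     \<and> gen_subfield \<iota> {x, y} = UNIV"

text \<open>K-automorphism of L (= automorphism of the curve, birationally).\<close>
definition K_aut :: "('k::field \<Rightarrow> 'L::field) \<Rightarrow> ('L \<Rightarrow> 'L) \<Rightarrow> bool" where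
  "K_aut \<iota> s \<longleftrightarrow> bij s \<and> (\<forall>z w. s (z + w) = s z + s w) \<and> (\<forall>z w. s (z * w) = s z * s w)
     \<and> (\<forall>c. s (\<iota> c) = \<iota> c)"

text \<open>The quotient curve by the automorphism t is (birationally) given by v^2 = h(u):
  the fixed field of t is K(u,v) with u transcendental, [K(u,v):K(u)] = 2 and v^2 = h(u).\<close>
definition quotient_given_by :: "('k::field \<Rightarrow> 'L::field) \<Rightarrow> ('L \<Rightarrow> 'L) \<Rightarrow> 'k poly \<Rightarrow> bool" where
  "quotient_given_by \<iota> t h \<longleftrightarrow> (\<exists>u v. t u = u \<and> t v = v \<and>
      {z. t z = z} = gen_subfield \<iota> {u, v} \<and> transcendental_over \<iota> u \<and>
      v \<notin> gen_subfield \<iota> {u} \<and> v ^ 2 = evalp \<iota> h u)"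

definition involution_claim ::
  "('k::field \<Rightarrow> 'L::field) \<Rightarrow> 'L \<Rightarrow> 'L \<Rightarrow> nat \<Rightarrow> 'k \<Rightarrow> 'k \<Rightarrow> 'k poly \<Rightarrow> 'k poly \<Rightarrow> bool" where
  "involution_claim \<iota> x y g \<alpha> c h1 h2 \<longleftrightarrow>
     (\<exists>\<sigma> \<omega>. K_aut \<iota> \<sigma> \<and> \<sigma> x = \<iota> \<alpha> / x \<and> \<sigma> y = y * \<iota> c / x ^ (g + 1) \<and>
        K_aut \<iota> \<omega> \<and> \<omega> x = x \<and> \<omega> y = - y \<and>
        \<sigma> \<circ> \<sigma> = id \<and> \<sigma> \<noteq> id \<and> \<sigma> \<noteq> \<omega> \<and>
        quotient_given_by \<iota> \<sigma> h1 \<and> quotient_given_by \<iota> (\<omega> \<circ> \<sigma>) h2)"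

end

theory Submission
  imports Defs
begin

text \<open>
  Dividing the curve equation by \<open>x^(g+1)\<close> gives \<open>y^2 / x^(g+1) = x^g + (\<alpha>/x)^g + a = D_g(u) + a\<close>
  with \<open>u = x + \<alpha>/x\<close>, which is invariant under \<open>x \<mapsto> \<alpha>/x\<close>; hence \<open>\<sigma>\<close> (for any
  \<open>c\<close> with \<open>c^2 = \<alpha>^(g+1)\<close>) maps the curve to itself. Every element of the function field is
  \<open>(A(x) + B(x) y) / Q(x)\<close> with \<open>1, y\<close> independent over \<open>K(x)\<close>, so substituting \<open>x, y\<close> by a
  transcendental \<open>w\<close> and a square root of \<open>f(w)\<close> is a well defined homomorphism; this yields
  \<open>\<sigma>\<close> and \<open>\<omega>\<close>.

  Let \<open>t\<close> be a \<open>K\<close>-automorphism with \<open>t x = \<alpha>/x\<close> and \<open>v = y r\<close> a \<open>t\<close>-invariant element with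
  \<open>0 \<noteq> r \<in> K(x)\<close>. Then \<open>x^2 = u x - \<alpha>\<close> and \<open>K(u, v, x)\<close> is the whole function field, so it
  equals \<open>K(u, v) + K(u, v) x\<close>; as \<open>t x \<noteq> x\<close>, the fixed field of \<open>t\<close> is exactly \<open>K(u, v)\<close>,
  and \<open>v^2 = x^(g+1) r^2 (D_g(u) + a)\<close>. The choices \<open>r = x^(-(g+1)/2)\<close> and
  \<open>r = (x - \<alpha>/x) x^(-(g+1)/2)\<close> for odd \<open>g\<close>, and \<open>r = (x \<plusminus> \<beta>) x^(-g/2-1)\<close> for even \<open>g\<close>,
  give the four quotient curves.
\<close>

section \<open>Dickson polynomials\<close>

definition dickson_coeff :: "nat \<Rightarrow> nat \<Rightarrow> nat" where
  "dickson_coeff m i = (m * ((m - i) choose i)) div (m - i)"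

lemma dickson_coeff_0: "1 \<le> m \<Longrightarrow> dickson_coeff m 0 = 1"
  by (simp add: dickson_coeff_def)

lemma dickson_coeff_half: "1 \<le> i \<Longrightarrow> dickson_coeff (2 * i) i = 2"
  by (simp add: dickson_coeff_def mult_2)

lemma dickson_coeff_Suc:
  "dickson_coeff (Suc n + Suc k) (Suc k) = (Suc n choose Suc k) + (n choose k)"
proof -
  have "(Suc n + Suc k) * (Suc n choose Suc k)
          = Suc n * (Suc n choose Suc k) + Suc k * (Suc n choose Suc k)"
    by (simp only: add_mult_distrib)
  also have "\<dots> = Suc n * ((Suc n choose Suc k) + (n choose k))"
    by (simp only: Suc_times_binomial distrib_left)
  finally show ?thesis
    unfolding dickson_coeff_def by (simp del: binomial_Suc_Suc mult_Suc)
qed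

lemma dickson_coeff_rec:
  assumes "1 \<le> i" and "2 * i \<le> m + 1"
  shows "dickson_coeff (m + 2) i = dickson_coeff (m + 1) i + dickson_coeff m (i - 1)"
proof -
  define k where "k = i - 1"
  define n where "n = m - Suc k"
  have i: "i = Suc k" and m: "m = Suc (n + k)"
    using assms unfolding k_def n_def by linarith+
  have "dickson_coeff (m + 2) i = (Suc (Suc n) choose Suc k) + (Suc n choose k)"
    using dickson_coeff_Suc[of "Suc n" k] by (simp add: i m)
  moreover have "dickson_coeff (m + 1) i = (Suc n choose Suc k) + (n choose k)"
    using dickson_coeff_Suc[of n k] by (simp add: i m)
  moreover have "dickson_coeff m (i - 1) = (Suc n choose k) + (if k = 0 then 0 else n choose (k - 1))"
  proof (cases k)
    case 0
    then show ?thesis using dickson_coeff_0[of m] by (simp add: i m)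
  next
    case (Suc k')
    then show ?thesis using dickson_coeff_Suc[of n k'] by (simp add: i m)
  qed
  ultimately show ?thesis by (cases k) simp_all
qed

lemma coeff_dickson:
  "coeff (dickson m \<alpha>) j
     = (\<Sum>i\<le>m div 2. if m - 2 * i = j then of_nat (dickson_coeff m i) * (- \<alpha>) ^ i else 0)"
  unfolding dickson_def dickson_coeff_def by (simp add: coeff_sum coeff_monom)

lemma coeff_dickson_eq:
  assumes "j = m - 2 * i" and "2 * i \<le> m"
  shows "coeff (dickson m \<alpha>) j = of_nat (dickson_coeff m i) * (- \<alpha>) ^ i"
proof -
  have "(m - 2 * k = j) \<longleftrightarrow> k = i" if "k \<le> m div 2" for k
    using that assms by linarith
  moreover have "i \<le> m div 2" using assms by linarith
  ultimately show ?thesis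
    unfolding coeff_dickson by (simp cong: if_cong)
qed

lemma coeff_dickson_eq_0:
  assumes "\<not> (j \<le> m \<and> even (m - j))"
  shows "coeff (dickson m \<alpha>) j = 0"
proof -
  have "m - 2 * k \<noteq> j" if "k \<le> m div 2" for k
  proof
    assume "m - 2 * k = j"
    then have "j \<le> m" "m - j = 2 * k" using that by linarith+
    then show False using assms by simp
  qed
  then show ?thesis unfolding coeff_dickson by simp
qed

lemma coeff_dickson_rec_support:
  assumes "1 \<le> m" and j: "j = m + 2 - 2 * i" and i: "2 * i \<le> m + 2"
  shows "coeff (dickson (m + 2) \<alpha>) j
           = coeff (pCons 0 (dickson (m + 1) \<alpha>)) j - \<alpha> * coeff (dickson m \<alpha>) j"
proof -
  consider "i = 0" | "1 \<le> i" "j = 0" | "1 \<le> i" "1 \<le> j" by linarith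
  then show ?thesis
  proof cases
    case 1
    then show ?thesis
      using assms by (simp add: coeff_dickson_eq[of _ _ 0] coeff_dickson_eq_0 dickson_coeff_0)
  next
    case 2
    then have "m = 2 * (i - 1)" "2 \<le> i" "m + 2 = 2 * i" using assms by linarith+
    then have "coeff (dickson m \<alpha>) j = 2 * (- \<alpha>) ^ (i - 1)"
      and "coeff (dickson (m + 2) \<alpha>) j = 2 * (- \<alpha>) ^ i"
      using 2 by (simp_all add: coeff_dickson_eq[of _ _ "i - 1"] coeff_dickson_eq[of _ _ i]
          dickson_coeff_half)
    then show ?thesis using 2 by (simp add: power_eq_if)
  next
    case 3
    have "coeff (dickson (m + 1) \<alpha>) (j - 1) = of_nat (dickson_coeff (m + 1) i) * (- \<alpha>) ^ i"
      and "coeff (dickson m \<alpha>) j = of_nat (dickson_coeff m (i - 1)) * (- \<alpha>) ^ (i - 1)"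
      and "coeff (dickson (m + 2) \<alpha>) j = of_nat (dickson_coeff (m + 2) i) * (- \<alpha>) ^ i"
      using 3 j i by (simp_all add: coeff_dickson_eq)
    moreover have "dickson_coeff (m + 2) i = dickson_coeff (m + 1) i + dickson_coeff m (i - 1)"
      using 3 j i by (intro dickson_coeff_rec) linarith+
    ultimately show ?thesis
      using 3 by (cases j) (simp_all add: power_eq_if algebra_simps)
  qed
qed

lemma dickson_rec:
  assumes "1 \<le> m"
  shows "dickson (m + 2) \<alpha> = pCons 0 (dickson (m + 1) \<alpha>) - smult \<alpha> (dickson m \<alpha>)"
proof (rule poly_eqI)
  fix j
  show "coeff (dickson (m + 2) \<alpha>) j = coeff (pCons 0 (dickson (m + 1) \<alpha>) - smult \<alpha> (dickson m \<alpha>)) j"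
  proof (cases "j \<le> m + 2 \<and> even (m + 2 - j)")
    case False
    then have "\<not> (j \<le> m \<and> even (m - j))" "\<not> (j - 1 \<le> m + 1 \<and> even (m + 1 - (j - 1)))" if "j \<noteq> 0"
      using that by (auto simp: le_diff_conv2 Suc_diff_le)
    then show ?thesis
      using False by (cases j) (simp_all add: coeff_dickson_eq_0)
  next
    case True
    define i where "i = (m + 2 - j) div 2"
    have "2 * i = m + 2 - j" unfolding i_def by (rule dvd_mult_div_cancel) (use True in blast)
    then have "j = m + 2 - 2 * i" and "2 * i \<le> m + 2" using True by linarith+
    then show ?thesis using coeff_dickson_rec_support[OF assms] by simp
  qed
qed

lemma poly_dickson:
  fixes s t :: "'a::field"
  assumes "s * t = \<alpha>" and "1 \<le> m"
  shows "poly (dickson m \<alpha>) (s + t) = s ^ m + t ^ m"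
  using assms(2)
proof (induction m rule: less_induct)
  case (less m)
  have "m = 1 \<or> m = 2 \<or> (\<exists>k. m = k + 2 \<and> 1 \<le> k)" using less.prems by presburger
  then consider "m = 1" | "m = 2" | k where "m = k + 2" "1 \<le> k" by blast
  then show ?case
  proof cases
    case 1
    then show ?thesis by (simp add: dickson_def poly_monom)
  next
    case 2
    have "poly (dickson 2 \<alpha>) (s + t) = (s + t) ^ 2 - 2 * \<alpha>"
      by (simp add: dickson_def numeral_2_eq_2 atMost_Suc poly_monom)
    then show ?thesis using 2 assms(1) by (simp add: power2_eq_square algebra_simps)
  next
    case 3
    have "poly (dickson m \<alpha>) (s + t)
            = (s + t) * poly (dickson (k + 1) \<alpha>) (s + t) - \<alpha> * poly (dickson k \<alpha>) (s + t)"
      unfolding \<open>m = k + 2\<close> dickson_rec[OF \<open>1 \<le> k\<close>] by simp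
    also have "\<dots> = (s + t) * (s ^ (k + 1) + t ^ (k + 1)) - s * t * (s ^ k + t ^ k)"
      using less.IH[of k] less.IH[of "k + 1"] 3 assms(1) by simp
    finally show ?thesis using 3 by (simp add: algebra_simps)
  qed
qed

section \<open>Fields generated over a constant field\<close>

lemma quad_frac_add:
  fixes a b q a' b' q' y :: "'a::field"
  assumes "q \<noteq> 0" "q' \<noteq> 0"
  shows "(a + b * y) / q + (a' + b' * y) / q'
           = ((a * q' + a' * q) + (b * q' + b' * q) * y) / (q * q')"
  using assms by (simp add: field_simps)

lemma quad_frac_mult:
  fixes a b q a' b' q' y F :: "'a::field"
  assumes "q \<noteq> 0" "q' \<noteq> 0" "y ^ 2 = F"
  shows "(a + b * y) / q * ((a' + b' * y) / q')
           = ((a * a' + b * b' * F) + (a * b' + a' * b) * y) / (q * q')"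
proof -
  have "(a + b * y) * (a' + b' * y) = (a * a' + b * b' * y ^ 2) + (a * b' + a' * b) * y"
    by (simp add: algebra_simps power2_eq_square)
  then show ?thesis using assms by simp
qed

lemma quad_frac_inverse:
  fixes a b q y F :: "'a::field"
  assumes "q \<noteq> 0" "y ^ 2 = F" "a ^ 2 - b ^ 2 * F \<noteq> 0"
  shows "inverse ((a + b * y) / q) = (q * a + - (q * b) * y) / (a ^ 2 - b ^ 2 * F)"
proof -
  have norm: "a ^ 2 - b ^ 2 * F = (a + b * y) * (a - b * y)"
    using assms(2) by (simp add: algebra_simps power2_eq_square)
  then have "a - b * y \<noteq> 0" using assms(3) by auto
  have "(q * a + - (q * b) * y) / (a ^ 2 - b ^ 2 * F) = (q * (a - b * y)) / ((a + b * y) * (a - b * y))"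
    unfolding norm by (simp add: algebra_simps)
  also have "\<dots> = q / (a + b * y)" using \<open>a - b * y \<noteq> 0\<close> by simp
  finally show ?thesis by simp
qed

lemma gen_subfield_subset:
  assumes "S \<subseteq> gen_subfield \<iota> T"
  shows "gen_subfield \<iota> S \<subseteq> gen_subfield \<iota> T"
proof
  fix z assume "z \<in> gen_subfield \<iota> S"
  then show "z \<in> gen_subfield \<iota> T"
    by (induction z rule: gen_subfield.induct) (use assms in \<open>auto intro: gen_subfield.intros\<close>)
qed

locale constant_field =
  fixes \<iota> :: "'k::field \<Rightarrow> 'L::field"
  assumes field_emb: "field_emb \<iota>"
begin

lemma emb_add [simp]: "\<iota> (a + b) = \<iota> a + \<iota> b"
  and emb_mult [simp]: "\<iota> (a * b) = \<iota> a * \<iota> b"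
  and emb_1 [simp]: "\<iota> 1 = 1"
  using field_emb by (simp_all add: field_emb_def)

lemma emb_0 [simp]: "\<iota> 0 = 0"
  using emb_add[of 0 0] by (metis add_cancel_right_right)

lemma emb_minus [simp]: "\<iota> (- a) = - \<iota> a"
  using emb_add[of a "- a"] by (metis emb_0 add.right_inverse minus_unique)

lemma emb_eq_0_iff [simp]: "\<iota> a = 0 \<longleftrightarrow> a = 0"
proof
  assume "\<iota> a = 0"
  then have "\<iota> (a * inverse a) = 0" by simp
  then show "a = 0" by (cases "a = 0") simp_all
qed simp

lemma emb_power [simp]: "\<iota> (a ^ n) = \<iota> a ^ n"
  by (induction n) simp_all

lemma emb_of_nat [simp]: "\<iota> (of_nat n) = of_nat n"
  by (induction n) simp_all

lemma emb_numeral [simp]: "\<iota> (numeral w) = numeral w"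
  using emb_of_nat[of "numeral w"] by simp

definition ev :: "'k poly \<Rightarrow> 'L \<Rightarrow> 'L" where
  "ev P z = poly (map_poly \<iota> P) z"

lemma ev_pCons [simp]: "ev (pCons c P) z = \<iota> c + z * ev P z"
  by (simp add: ev_def map_poly_pCons)

lemma ev_0 [simp]: "ev 0 z = 0"
  by (simp add: ev_def)

lemma ev_add [simp]: "ev (P + Q) z = ev P z + ev Q z"
proof (induction P arbitrary: Q)
  case (pCons c P)
  then show ?case by (cases Q) (simp add: distrib_left add_ac)
qed simp

lemma ev_smult [simp]: "ev (smult c P) z = \<iota> c * ev P z"
  by (induction P) (simp_all add: algebra_simps)

lemma ev_mult [simp]: "ev (P * Q) z = ev P z * ev Q z"
  by (induction P) (simp_all add: algebra_simps)

lemma ev_minus [simp]: "ev (- P) z = - ev P z"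
  using ev_add[of P "- P" z] by (metis ev_0 add.right_inverse minus_unique)

lemma ev_diff [simp]: "ev (P - Q) z = ev P z - ev Q z"
  using ev_add[of P "- Q" z] by simp

lemma ev_1 [simp]: "ev 1 z = 1"
  by (simp add: one_pCons)

lemma ev_power [simp]: "ev (P ^ n) z = ev P z ^ n"
  by (induction n) simp_all

lemma ev_monom [simp]: "ev (monom c n) z = \<iota> c * z ^ n"
  by (simp add: ev_def map_poly_monom poly_monom)

lemma ev_sum [simp]: "ev (sum F S) z = (\<Sum>i\<in>S. ev (F i) z)"
  by (induction S rule: infinite_finite_induct) simp_all

lemma evalp_eq_ev: "evalp \<iota> P z = ev P z"
  by (simp add: evalp_def ev_def poly_altdef degree_map_poly coeff_map_poly)

lemma ev_dickson: "ev (dickson m \<alpha>) z = poly (dickson m (\<iota> \<alpha>)) z"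
  by (simp add: dickson_def poly_sum poly_monom)

lemma gen_subfield_0: "0 \<in> gen_subfield \<iota> S"
  and gen_subfield_1: "1 \<in> gen_subfield \<iota> S"
  using gen_subfield.const[of \<iota> 0] gen_subfield.const[of \<iota> 1] by simp_all

lemma gen_subfield_power: "z \<in> gen_subfield \<iota> S \<Longrightarrow> z ^ n \<in> gen_subfield \<iota> S"
  by (induction n) (simp_all add: gen_subfield_1 gen_subfield.mult)

lemma gen_subfield_diff:
  "z \<in> gen_subfield \<iota> S \<Longrightarrow> w \<in> gen_subfield \<iota> S \<Longrightarrow> z - w \<in> gen_subfield \<iota> S"
  unfolding diff_conv_add_uminus by (intro gen_subfield.add gen_subfield.neg)

lemma gen_subfield_divide:
  "z \<in> gen_subfield \<iota> S \<Longrightarrow> w \<in> gen_subfield \<iota> S \<Longrightarrow> z / w \<in> gen_subfield \<iota> S"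
  unfolding divide_inverse by (intro gen_subfield.mult gen_subfield.inv)

lemma gen_subfield_ev: "z \<in> gen_subfield \<iota> S \<Longrightarrow> ev P z \<in> gen_subfield \<iota> S"
  by (induction P) (auto intro: gen_subfield.intros gen_subfield_0)

lemma transcendental_ev_eq_0D: "transcendental_over \<iota> z \<Longrightarrow> ev P z = 0 \<Longrightarrow> P = 0"
  by (auto simp: transcendental_over_def evalp_eq_ev)

definition K_hom :: "('L \<Rightarrow> 'L) \<Rightarrow> bool" where
  "K_hom s \<longleftrightarrow> (\<forall>z w. s (z + w) = s z + s w) \<and> (\<forall>z w. s (z * w) = s z * s w)
     \<and> (\<forall>c. s (\<iota> c) = \<iota> c)"

lemma K_aut_iff: "K_aut \<iota> s \<longleftrightarrow> bij s \<and> K_hom s"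
  by (auto simp: K_aut_def K_hom_def)

lemma K_hom_comp: "K_hom s \<Longrightarrow> K_hom t \<Longrightarrow> K_hom (s \<circ> t)"
  by (simp add: K_hom_def)

context
  fixes s assumes s: "K_hom s"
begin

lemma K_hom_add: "s (z + w) = s z + s w"
  and K_hom_mult: "s (z * w) = s z * s w"
  and K_hom_emb: "s (\<iota> c) = \<iota> c"
  using s by (simp_all add: K_hom_def)

lemma K_hom_0: "s 0 = 0"
  using K_hom_emb[of 0] by simp

lemma K_hom_1: "s 1 = 1"
  using K_hom_emb[of 1] by simp

lemma K_hom_minus: "s (- z) = - s z"
  using K_hom_add[of z "- z"] K_hom_0 by (metis add.right_inverse minus_unique)

lemma K_hom_inverse: "s (inverse z) = inverse (s z)"
proof (cases "z = 0")
  case False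
  then have "s z * s (inverse z) = 1" using K_hom_mult[of z "inverse z"] K_hom_1 by simp
  then show ?thesis by (metis inverse_unique)
qed (simp add: K_hom_0)

lemma K_hom_divide: "s (z / w) = s z / s w"
  by (simp add: divide_inverse K_hom_mult K_hom_inverse)

lemma K_hom_power: "s (z ^ n) = s z ^ n"
  by (induction n) (simp_all add: K_hom_1 K_hom_mult)

lemma K_hom_ev: "s (ev P z) = ev P (s z)"
  by (induction P) (simp_all add: K_hom_0 K_hom_add K_hom_mult K_hom_emb)

lemma K_hom_eq_0_iff: "s z = 0 \<longleftrightarrow> z = 0"
proof
  assume "s z = 0"
  then have "s (z * inverse z) = 0" by (simp add: K_hom_mult)
  then show "z = 0" by (cases "z = 0") (simp_all add: K_hom_1)
qed (simp add: K_hom_0)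

lemma K_hom_fixes_gen_subfield:
  assumes "z \<in> gen_subfield \<iota> S" "\<And>z. z \<in> S \<Longrightarrow> s z = z"
  shows "s z = z"
  using assms(1)
  by (induction z rule: gen_subfield.induct)
    (simp_all add: assms(2) K_hom_emb K_hom_add K_hom_mult K_hom_minus K_hom_inverse)

end

end

locale conjugation = constant_field \<iota> for \<iota> :: "'k::field \<Rightarrow> 'L::field" +
  fixes t :: "'L \<Rightarrow> 'L" and T :: "'L set" and x u :: 'L
  assumes K_hom_t: "K_hom t"
    and t_fixes_T: "\<And>z. z \<in> T \<Longrightarrow> t z = z"
    and t_x: "t x = u - x"
    and trace_in: "u \<in> gen_subfield \<iota> T"
    and norm_in: "x * (u - x) \<in> gen_subfield \<iota> T"
begin

definition span_1_x :: "'L set" where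
  "span_1_x = {m1 + m2 * x | m1 m2. m1 \<in> gen_subfield \<iota> T \<and> m2 \<in> gen_subfield \<iota> T}"

lemma span_1_xI: "m1 \<in> gen_subfield \<iota> T \<Longrightarrow> m2 \<in> gen_subfield \<iota> T \<Longrightarrow> m1 + m2 * x \<in> span_1_x"
  unfolding span_1_x_def by blast

lemma span_1_xE:
  assumes "z \<in> span_1_x"
  obtains m1 m2 where "m1 \<in> gen_subfield \<iota> T" "m2 \<in> gen_subfield \<iota> T" "z = m1 + m2 * x"
  using assms unfolding span_1_x_def by blast

lemma gen_subfield_T_subset_span: "gen_subfield \<iota> T \<subseteq> span_1_x"
  using span_1_xI[OF _ gen_subfield_0] by auto

lemma x_in_span: "x \<in> span_1_x"
  using span_1_xI[OF gen_subfield_0 gen_subfield_1] by simp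

lemma t_span:
  assumes "m1 \<in> gen_subfield \<iota> T" "m2 \<in> gen_subfield \<iota> T"
  shows "t (m1 + m2 * x) = m1 + m2 * (u - x)"
  using K_hom_fixes_gen_subfield[OF K_hom_t _ t_fixes_T] assms
  by (simp add: K_hom_add[OF K_hom_t] K_hom_mult[OF K_hom_t] t_x)

lemma span_add: "z \<in> span_1_x \<Longrightarrow> w \<in> span_1_x \<Longrightarrow> z + w \<in> span_1_x"
proof (elim span_1_xE)
  fix m1 m2 n1 n2 assume "m1 \<in> gen_subfield \<iota> T" "m2 \<in> gen_subfield \<iota> T"
    "n1 \<in> gen_subfield \<iota> T" "n2 \<in> gen_subfield \<iota> T"
  then have "(m1 + n1) + (m2 + n2) * x \<in> span_1_x"
    by (intro span_1_xI gen_subfield.add)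
  then show "z = m1 + m2 * x \<Longrightarrow> w = n1 + n2 * x \<Longrightarrow> z + w \<in> span_1_x"
    by (simp add: algebra_simps)
qed

lemma span_minus: "z \<in> span_1_x \<Longrightarrow> - z \<in> span_1_x"
proof (elim span_1_xE)
  fix m1 m2 assume "m1 \<in> gen_subfield \<iota> T" "m2 \<in> gen_subfield \<iota> T"
  then have "(- m1) + (- m2) * x \<in> span_1_x"
    by (intro span_1_xI gen_subfield.neg)
  then show "z = m1 + m2 * x \<Longrightarrow> - z \<in> span_1_x" by simp
qed

lemma span_mult: "z \<in> span_1_x \<Longrightarrow> w \<in> span_1_x \<Longrightarrow> z * w \<in> span_1_x"
proof (elim span_1_xE)
  fix m1 m2 n1 n2 assume M: "m1 \<in> gen_subfield \<iota> T" "m2 \<in> gen_subfield \<iota> T"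
    "n1 \<in> gen_subfield \<iota> T" "n2 \<in> gen_subfield \<iota> T"
  define N where "N = x * (u - x)"
  have "(m1 + m2 * x) * (n1 + n2 * x)
          = (m1 * n1 - m2 * n2 * N) + (m1 * n2 + m2 * n1 + m2 * n2 * u) * x"
    unfolding N_def by (simp add: algebra_simps)
  moreover have "(m1 * n1 - m2 * n2 * N) + (m1 * n2 + m2 * n1 + m2 * n2 * u) * x \<in> span_1_x"
    using M trace_in norm_in[folded N_def]
    by (intro span_1_xI gen_subfield_diff gen_subfield.add gen_subfield.mult)
  ultimately show "z = m1 + m2 * x \<Longrightarrow> w = n1 + n2 * x \<Longrightarrow> z * w \<in> span_1_x" by simp
qed

lemma span_inverse: "z \<in> span_1_x \<Longrightarrow> inverse z \<in> span_1_x"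
proof (elim span_1_xE)
  fix m1 m2 assume M: "m1 \<in> gen_subfield \<iota> T" "m2 \<in> gen_subfield \<iota> T"
  assume z: "z = m1 + m2 * x"
  show "inverse z \<in> span_1_x"
  proof (cases "z = 0")
    case True
    then show ?thesis using gen_subfield_T_subset_span gen_subfield_0 by auto
  next
    case False
    \<comment> \<open>multiply by the conjugate: the norm \<open>z * t z\<close> lies in the base field\<close>
    define Nx where "Nx = x * (u - x)"
    define N where "N = m1 * m1 + m1 * m2 * u + m2 * m2 * Nx"
    have N_in: "N \<in> gen_subfield \<iota> T"
      unfolding N_def using M trace_in norm_in[folded Nx_def] by (intro gen_subfield.add gen_subfield.mult)
    have tz: "t z \<noteq> 0" using False K_hom_eq_0_iff[OF K_hom_t] by simp
    have zN: "z * t z = N" unfolding z t_span[OF M] N_def Nx_def by (simp add: algebra_simps)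
    then have "N \<noteq> 0" using False tz by (metis no_zero_divisors)
    have "inverse z = t z / N" unfolding zN[symmetric] using tz by (simp add: inverse_eq_divide)
    also have "\<dots> = (m1 + m2 * u) / N + (- m2 / N) * x"
      unfolding z t_span[OF M] using \<open>N \<noteq> 0\<close> by (simp add: field_simps)
    finally show ?thesis
      using M N_in trace_in
      by (simp only:) (intro span_1_xI gen_subfield_divide gen_subfield.add gen_subfield.mult gen_subfield.neg)
  qed
qed

lemma gen_subfield_insert_x_subset: "gen_subfield \<iota> (insert x T) \<subseteq> span_1_x"
proof
  fix z assume "z \<in> gen_subfield \<iota> (insert x T)"
  then show "z \<in> span_1_x"
    by (induction z rule: gen_subfield.induct)
      (use gen_subfield_T_subset_span x_in_span in
        \<open>auto intro: gen_subfield.intros span_add span_mult span_minus span_inverse\<close>)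
qed

lemma fixed_field_eq:
  assumes "gen_subfield \<iota> (insert x T) = UNIV" and "t x \<noteq> x"
  shows "{z. t z = z} = gen_subfield \<iota> T"
proof
  show "gen_subfield \<iota> T \<subseteq> {z. t z = z}"
    using K_hom_fixes_gen_subfield[OF K_hom_t _ t_fixes_T] by blast
  show "{z. t z = z} \<subseteq> gen_subfield \<iota> T"
  proof
    fix z assume "z \<in> {z. t z = z}"
    moreover obtain m1 m2 where M: "m1 \<in> gen_subfield \<iota> T" "m2 \<in> gen_subfield \<iota> T"
      and z: "z = m1 + m2 * x"
      using gen_subfield_insert_x_subset assms(1) span_1_xE by blast
    ultimately have "m2 * (u - x - x) = 0" using t_span[OF M] by (simp add: algebra_simps)
    moreover have "u - x - x \<noteq> 0" using assms(2) t_x by simp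
    ultimately show "z \<in> gen_subfield \<iota> T" using z M by simp
  qed
qed

end

section \<open>Hyperelliptic function fields\<close>

locale hyperelliptic_ff = constant_field \<iota> for \<iota> :: "'k::field \<Rightarrow> 'L::field" +
  fixes f :: "'k poly" and x y :: 'L
  assumes transcendental_x: "transcendental_over \<iota> x"
    and y_sq: "y ^ 2 = ev f x"
    and generated: "gen_subfield \<iota> {x, y} = UNIV"
    and odd_degree: "odd (degree f)"
begin

lemmas ev_x_eq_0D = transcendental_ev_eq_0D[OF transcendental_x]

lemma x_nonzero: "x \<noteq> 0"
  using ev_x_eq_0D[of "[:0, 1:]"] by auto

lemma square_eq_f_times_squareD:
  assumes "P ^ 2 = f * R ^ 2"
  shows "R = 0"
proof (rule ccontr)
  assume R: "R \<noteq> 0"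
  moreover have "f \<noteq> 0" using odd_degree by auto
  ultimately have "P \<noteq> 0" using assms by auto
  then have "2 * degree P = degree f + 2 * degree R"
    using arg_cong[OF assms, of degree] R \<open>f \<noteq> 0\<close> by (simp add: degree_power_eq degree_mult_eq)
  then show False using odd_degree by presburger
qed

lemma ev_add_mult_y_eq_0D:
  assumes "ev P x + ev R x * y = 0"
  shows "P = 0 \<and> R = 0"
proof -
  have "ev P x = - (ev R x * y)"
    using assms by (simp add: eq_neg_iff_add_eq_0)
  then have "ev P x ^ 2 = ev R x ^ 2 * y ^ 2"
    by (simp add: power_mult_distrib)
  then have "ev (P ^ 2 - f * R ^ 2) x = 0" using y_sq by simp
  then have "P ^ 2 - f * R ^ 2 = 0" by (rule ev_x_eq_0D)
  then have "R = 0" using square_eq_f_times_squareD by simp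
  then show ?thesis using assms ev_x_eq_0D by simp
qed

definition frac_span_1_y :: "'L set" where
  "frac_span_1_y = {(ev A x + ev B x * y) / ev Q x | A B Q. Q \<noteq> 0}"

lemma frac_span_1_yI: "Q \<noteq> 0 \<Longrightarrow> (ev A x + ev B x * y) / ev Q x \<in> frac_span_1_y"
  unfolding frac_span_1_y_def by blast

lemma frac_span_1_yE:
  assumes "z \<in> frac_span_1_y"
  obtains A B Q where "(Q :: 'k poly) \<noteq> 0" "ev Q x \<noteq> 0" "z = (ev A x + ev B x * y) / ev Q x"
  using assms ev_x_eq_0D unfolding frac_span_1_y_def by blast

lemma frac_span_add: "z \<in> frac_span_1_y \<Longrightarrow> w \<in> frac_span_1_y \<Longrightarrow> z + w \<in> frac_span_1_y"
proof (elim frac_span_1_yE)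
  fix A B Q A' B' Q' assume "Q \<noteq> 0" "Q' \<noteq> 0" and q: "ev Q x \<noteq> 0" "ev Q' x \<noteq> 0"
  then have "(ev (A * Q' + A' * Q) x + ev (B * Q' + B' * Q) x * y) / ev (Q * Q') x \<in> frac_span_1_y"
    by (intro frac_span_1_yI) simp
  then show "z = (ev A x + ev B x * y) / ev Q x \<Longrightarrow> w = (ev A' x + ev B' x * y) / ev Q' x
               \<Longrightarrow> z + w \<in> frac_span_1_y"
    by (simp only: ev_add ev_mult quad_frac_add[OF q])
qed

lemma frac_span_mult: "z \<in> frac_span_1_y \<Longrightarrow> w \<in> frac_span_1_y \<Longrightarrow> z * w \<in> frac_span_1_y"
proof (elim frac_span_1_yE)
  fix A B Q A' B' Q' assume "Q \<noteq> 0" "Q' \<noteq> 0" and q: "ev Q x \<noteq> 0" "ev Q' x \<noteq> 0"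
  then have "(ev (A * A' + B * B' * f) x + ev (A * B' + A' * B) x * y) / ev (Q * Q') x \<in> frac_span_1_y"
    by (intro frac_span_1_yI) simp
  then show "z = (ev A x + ev B x * y) / ev Q x \<Longrightarrow> w = (ev A' x + ev B' x * y) / ev Q' x
               \<Longrightarrow> z * w \<in> frac_span_1_y"
    by (simp only: ev_add ev_mult quad_frac_mult[OF q y_sq])
qed

lemma frac_span_minus: "z \<in> frac_span_1_y \<Longrightarrow> - z \<in> frac_span_1_y"
proof (elim frac_span_1_yE)
  fix A B Q :: "'k poly" assume "Q \<noteq> 0"
  then have "(ev (- A) x + ev (- B) x * y) / ev Q x \<in> frac_span_1_y" by (rule frac_span_1_yI)
  then show "z = (ev A x + ev B x * y) / ev Q x \<Longrightarrow> - z \<in> frac_span_1_y"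
    by (simp add: minus_divide_left)
qed

lemma frac_span_inverse: "z \<in> frac_span_1_y \<Longrightarrow> inverse z \<in> frac_span_1_y"
proof (elim frac_span_1_yE)
  fix A B Q assume q: "ev Q x \<noteq> 0" and z: "z = (ev A x + ev B x * y) / ev Q x"
  show "inverse z \<in> frac_span_1_y"
  proof (cases "A ^ 2 - B ^ 2 * f = 0")
    case True
    then have "A = 0" "B = 0" using square_eq_f_times_squareD[of A B] by (simp_all add: algebra_simps)
    then show ?thesis using frac_span_1_yI[of 1 0 0] by (simp add: z)
  next
    case False
    then have "ev (A ^ 2 - B ^ 2 * f) x \<noteq> 0" using ev_x_eq_0D by blast
    then have inv: "inverse z = (ev (Q * A) x + ev (- (Q * B)) x * y) / ev (A ^ 2 - B ^ 2 * f) x"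
      unfolding z using quad_frac_inverse[OF q y_sq] by simp
    show ?thesis unfolding inv by (rule frac_span_1_yI[OF False])
  qed
qed

lemma frac_span_1_y_eq_UNIV: "frac_span_1_y = UNIV"
proof -
  have "z \<in> frac_span_1_y" if "z \<in> gen_subfield \<iota> {x, y}" for z
    using that
  proof (induction z rule: gen_subfield.induct)
    case (const c)
    show ?case using frac_span_1_yI[of 1 "[:c:]" 0] by simp
  next
    case (gen z)
    then show ?case using frac_span_1_yI[of 1 "[:0, 1:]" 0] frac_span_1_yI[of 1 0 1] by auto
  qed (auto intro: frac_span_add frac_span_mult frac_span_minus frac_span_inverse)
  then show ?thesis using generated by auto
qed

lemma normal_formE:
  obtains A B Q where "(Q :: 'k poly) \<noteq> 0" "ev Q x \<noteq> 0" "z = (ev A x + ev B x * y) / ev Q x"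
proof -
  have "z \<in> frac_span_1_y" using frac_span_1_y_eq_UNIV by simp
  then show ?thesis using that by (rule frac_span_1_yE)
qed

lemma gen_subfield_x_fraction:
  "z \<in> gen_subfield \<iota> {x} \<Longrightarrow> \<exists>A Q. Q \<noteq> 0 \<and> z = ev A x / ev Q x"
proof (induction z rule: gen_subfield.induct)
  case (const c)
  show ?case by (intro exI[of _ "[:c:]"] exI[of _ 1]) simp
next
  case (gen z)
  then show ?case by (intro exI[of _ "[:0, 1:]"] exI[of _ 1]) simp
next
  case (add z w)
  then obtain A Q A' Q' where Q: "Q \<noteq> 0" "Q' \<noteq> 0"
    and z: "z = ev A x / ev Q x" and w: "w = ev A' x / ev Q' x"
    by blast
  then have "ev Q x \<noteq> 0" "ev Q' x \<noteq> 0" using ev_x_eq_0D by blast+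
  then have "z + w = ev (A * Q' + A' * Q) x / ev (Q * Q') x"
    unfolding z w by (simp add: field_simps)
  with Q show ?case by (metis mult_eq_0_iff)
next
  case (mult z w)
  then obtain A Q A' Q' where "Q \<noteq> 0" "Q' \<noteq> 0" "z = ev A x / ev Q x" "w = ev A' x / ev Q' x"
    by blast
  then show ?case by (intro exI[of _ "A * A'"] exI[of _ "Q * Q'"]) simp
next
  case (neg z)
  then obtain A Q where "Q \<noteq> 0" "z = ev A x / ev Q x" by blast
  then show ?case by (intro exI[of _ "- A"] exI[of _ Q]) simp
next
  case (inv z)
  then obtain A Q where Q: "Q \<noteq> 0" and z: "z = ev A x / ev Q x" by blast
  show ?case
  proof (cases "A = 0")
    case True
    then show ?thesis by (intro exI[of _ 0] exI[of _ 1]) (simp add: z)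
  next
    case False
    then show ?thesis by (intro exI[of _ Q] exI[of _ A]) (simp add: z)
  qed
qed

lemma y_notin_gen_subfield_x: "y \<notin> gen_subfield \<iota> {x}"
proof
  assume "y \<in> gen_subfield \<iota> {x}"
  then obtain A Q where Q: "Q \<noteq> 0" and y: "y = ev A x / ev Q x"
    using gen_subfield_x_fraction by blast
  then have "ev Q x \<noteq> 0" using ev_x_eq_0D by blast
  then have "ev A x + ev (- Q) x * y = 0" unfolding y by simp
  then have "- Q = 0" by (rule ev_add_mult_y_eq_0D[THEN conjunct2])
  with Q show False by simp
qed

definition normal_form :: "'L \<Rightarrow> 'k poly \<times> 'k poly \<times> 'k poly" where
  "normal_form z = (SOME (A, B, Q). Q \<noteq> 0 \<and> z = (ev A x + ev B x * y) / ev Q x)"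

lemma normal_form:
  assumes "normal_form z = (A, B, Q)"
  shows "Q \<noteq> 0" and "z = (ev A x + ev B x * y) / ev Q x"
proof -
  have "\<exists>nf. (\<lambda>(A, B, Q). Q \<noteq> 0 \<and> z = (ev A x + ev B x * y) / ev Q x) nf"
    by (rule normal_formE[of z]) auto
  then have "(\<lambda>(A, B, Q). Q \<noteq> 0 \<and> z = (ev A x + ev B x * y) / ev Q x) (normal_form z)"
    unfolding normal_form_def by (rule someI_ex)
  then show "Q \<noteq> 0" "z = (ev A x + ev B x * y) / ev Q x" using assms by auto
qed

definition subst :: "'L \<Rightarrow> 'L \<Rightarrow> 'L \<Rightarrow> 'L" where
  "subst w y' z = (case normal_form z of (A, B, Q) \<Rightarrow> (ev A w + ev B w * y') / ev Q w)"

context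
  fixes w y' :: 'L
  assumes transcendental_w: "transcendental_over \<iota> w" and y'_sq: "y' ^ 2 = ev f w"
begin

lemmas ev_w_eq_0D = transcendental_ev_eq_0D[OF transcendental_w]

text \<open>Well defined because \<open>1, y\<close> are linearly independent over \<open>K(x)\<close> and \<open>w\<close> is transcendental.\<close>
lemma subst_eq:
  assumes Q: "Q \<noteq> 0" and z: "z = (ev A x + ev B x * y) / ev Q x"
  shows "subst w y' z = (ev A w + ev B w * y') / ev Q w"
proof -
  obtain A' B' Q' where nf: "normal_form z = (A', B', Q')" by (cases "normal_form z") auto
  note Q' = normal_form[OF nf]
  have "ev Q x \<noteq> 0" "ev Q' x \<noteq> 0" "ev Q w \<noteq> 0" "ev Q' w \<noteq> 0"
    using Q Q'(1) ev_x_eq_0D ev_w_eq_0D by blast+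
  moreover have "(ev A x + ev B x * y) / ev Q x = (ev A' x + ev B' x * y) / ev Q' x"
    using z Q'(2) by simp
  ultimately have "ev (A * Q' - A' * Q) x + ev (B * Q' - B' * Q) x * y = 0"
    by (simp add: frac_eq_eq algebra_simps)
  then have "A * Q' - A' * Q = 0 \<and> B * Q' - B' * Q = 0" by (rule ev_add_mult_y_eq_0D)
  then have "A * Q' = A' * Q" "B * Q' = B' * Q" by simp_all
  then have "ev A w * ev Q' w = ev A' w * ev Q w" "ev B w * ev Q' w = ev B' w * ev Q w"
    by (metis ev_mult)+
  with \<open>ev Q w \<noteq> 0\<close> \<open>ev Q' w \<noteq> 0\<close> show ?thesis
    by (simp add: subst_def nf frac_eq_eq algebra_simps)
qed

lemma subst_emb: "subst w y' (\<iota> c) = \<iota> c"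
  using subst_eq[of 1 "\<iota> c" "[:c:]" 0] by simp

lemma subst_x: "subst w y' x = w"
  using subst_eq[of 1 x "[:0, 1:]" 0] by simp

lemma subst_y: "subst w y' y = y'"
  using subst_eq[of 1 y 0 1] by simp

lemma subst_add: "subst w y' (z1 + z2) = subst w y' z1 + subst w y' z2"
proof -
  obtain A B Q where Q1: "Q \<noteq> 0" and qx1: "ev Q x \<noteq> 0"
    and z1: "z1 = (ev A x + ev B x * y) / ev Q x" by (rule normal_formE)
  obtain A' B' Q' where Q2: "Q' \<noteq> 0" and qx2: "ev Q' x \<noteq> 0"
    and z2: "z2 = (ev A' x + ev B' x * y) / ev Q' x" by (rule normal_formE)
  note Q = Q1 Q2 and qx = qx1 qx2
  have qw: "ev Q w \<noteq> 0" "ev Q' w \<noteq> 0" using Q ev_w_eq_0D by blast+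
  have "z1 + z2 = (ev (A * Q' + A' * Q) x + ev (B * Q' + B' * Q) x * y) / ev (Q * Q') x"
    unfolding z1 z2 ev_add ev_mult by (rule quad_frac_add[OF qx])
  then have "subst w y' (z1 + z2) = (ev (A * Q' + A' * Q) w + ev (B * Q' + B' * Q) w * y') / ev (Q * Q') w"
    using Q by (intro subst_eq) simp_all
  also have "\<dots> = subst w y' z1 + subst w y' z2"
    unfolding subst_eq[OF Q(1) z1] subst_eq[OF Q(2) z2] ev_add ev_mult
    by (rule quad_frac_add[OF qw, symmetric])
  finally show ?thesis .
qed

lemma subst_mult: "subst w y' (z1 * z2) = subst w y' z1 * subst w y' z2"
proof -
  obtain A B Q where Q1: "Q \<noteq> 0" and qx1: "ev Q x \<noteq> 0"
    and z1: "z1 = (ev A x + ev B x * y) / ev Q x" by (rule normal_formE)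
  obtain A' B' Q' where Q2: "Q' \<noteq> 0" and qx2: "ev Q' x \<noteq> 0"
    and z2: "z2 = (ev A' x + ev B' x * y) / ev Q' x" by (rule normal_formE)
  note Q = Q1 Q2 and qx = qx1 qx2
  have qw: "ev Q w \<noteq> 0" "ev Q' w \<noteq> 0" using Q ev_w_eq_0D by blast+
  have "z1 * z2 = (ev (A * A' + B * B' * f) x + ev (A * B' + A' * B) x * y) / ev (Q * Q') x"
    unfolding z1 z2 ev_add ev_mult by (rule quad_frac_mult[OF qx y_sq])
  then have "subst w y' (z1 * z2)
               = (ev (A * A' + B * B' * f) w + ev (A * B' + A' * B) w * y') / ev (Q * Q') w"
    using Q by (intro subst_eq) simp_all
  also have "\<dots> = subst w y' z1 * subst w y' z2"
    unfolding subst_eq[OF Q(1) z1] subst_eq[OF Q(2) z2] ev_add ev_mult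
    by (rule quad_frac_mult[OF qw y'_sq, symmetric])
  finally show ?thesis .
qed

lemma K_hom_subst: "K_hom (subst w y')"
  unfolding K_hom_def using subst_add subst_mult subst_emb by blast

lemma subst_involution:
  assumes "subst w y' w = x" and "subst w y' y' = y"
  shows "subst w y' \<circ> subst w y' = id" and "K_aut \<iota> (subst w y')"
proof -
  have "K_hom (subst w y' \<circ> subst w y')" using K_hom_comp K_hom_subst by blast
  moreover have "z \<in> gen_subfield \<iota> {x, y}" for z using generated by simp
  ultimately have "(subst w y' \<circ> subst w y') z = z" for z
    by (rule K_hom_fixes_gen_subfield) (use assms subst_x subst_y in auto)
  then show inv: "subst w y' \<circ> subst w y' = id" by auto
  then have "bij (subst w y')" using o_bij by blast
  then show "K_aut \<iota> (subst w y')" using K_hom_subst by (simp add: K_aut_iff)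
qed

end

lemma emb_div_x_neq_x: "\<iota> c / x \<noteq> x"
proof
  assume "\<iota> c / x = x"
  then have "x * x = \<iota> c" using x_nonzero by (simp add: field_simps)
  then have "ev [:- c, 0, 1:] x = 0" by simp
  then have "[:- c, 0, 1:] = 0" by (rule ev_x_eq_0D)
  then show False by simp
qed

lemma transcendental_ev_div_x:
  assumes R0: "poly R 0 \<noteq> 0"
  shows "transcendental_over \<iota> (ev R x / x)"
  unfolding transcendental_over_def evalp_eq_ev
proof (intro allI impI notI)
  fix P :: "'k poly" assume "P \<noteq> 0" and P_root: "ev P (ev R x / x) = 0"
  define d where "d = degree P"
  \<comment> \<open>the numerator of \<open>P(R(x)/x)\<close>; its constant term is \<open>lead_coeff P * R(0)^d \<noteq> 0\<close>\<close>
  define H where "H = (\<Sum>i\<le>d. smult (coeff P i) (R ^ i * [:0, 1:] ^ (d - i)))"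
  have "ev H x = (\<Sum>i\<le>d. x ^ d * (\<iota> (coeff P i) * (ev R x / x) ^ i))"
    unfolding H_def ev_sum
  proof (rule sum.cong)
    fix i assume "i \<in> {..d}"
    then have "x ^ d = x ^ i * x ^ (d - i)" by (simp flip: power_add)
    then show "ev (smult (coeff P i) (R ^ i * [:0, 1:] ^ (d - i))) x
                 = x ^ d * (\<iota> (coeff P i) * (ev R x / x) ^ i)"
      using x_nonzero by (simp add: power_divide field_simps)
  qed simp
  also have "\<dots> = x ^ d * ev P (ev R x / x)"
    by (simp add: evalp_eq_ev[symmetric] evalp_def d_def sum_distrib_left)
  finally have "H = 0" using P_root ev_x_eq_0D by simp
  moreover have "poly H 0 = coeff P d * poly R 0 ^ d"
  proof -
    have "poly H 0 = (\<Sum>i\<le>d. if i = d then coeff P d * poly R 0 ^ d else 0)"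
      unfolding H_def poly_sum by (rule sum.cong) auto
    then show ?thesis by simp
  qed
  ultimately show False using R0 \<open>P \<noteq> 0\<close> by (simp add: d_def)
qed

lemma gen_subfield_x_y_mult_eq_UNIV:
  assumes "r \<in> gen_subfield \<iota> {x}" "r \<noteq> 0"
  shows "gen_subfield \<iota> {x, u, y * r} = UNIV"
proof -
  have "gen_subfield \<iota> {x} \<subseteq> gen_subfield \<iota> {x, u, y * r}"
    by (rule gen_subfield_subset) (simp add: gen_subfield.gen)
  then have "r \<in> gen_subfield \<iota> {x, u, y * r}" using assms(1) by blast
  then have "y * r / r \<in> gen_subfield \<iota> {x, u, y * r}"
    by (intro gen_subfield_divide) (simp_all add: gen_subfield.gen)
  then have "gen_subfield \<iota> {x, y} \<subseteq> gen_subfield \<iota> {x, u, y * r}"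
    using assms(2) by (intro gen_subfield_subset) (simp add: gen_subfield.gen)
  then show ?thesis using generated by blast
qed

lemma y_mult_notin_gen_subfield:
  assumes "r \<in> gen_subfield \<iota> {x}" "r \<noteq> 0" and "u \<in> gen_subfield \<iota> {x}"
  shows "y * r \<notin> gen_subfield \<iota> {u}"
proof
  assume "y * r \<in> gen_subfield \<iota> {u}"
  moreover have "gen_subfield \<iota> {u} \<subseteq> gen_subfield \<iota> {x}"
    using assms(3) by (intro gen_subfield_subset) simp
  ultimately have "y * r / r \<in> gen_subfield \<iota> {x}" using assms(1) by (blast intro: gen_subfield_divide)
  then show False using assms(2) y_notin_gen_subfield_x by simp
qed

lemma transcendental_x_plus_div_x:
  assumes "\<alpha> \<noteq> 0"
  shows "transcendental_over \<iota> (x + \<iota> \<alpha> / x)"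
proof -
  have "x + \<iota> \<alpha> / x = ev [:\<alpha>, 0, 1:] x / x"
    using x_nonzero by (simp add: field_simps power2_eq_square)
  then show ?thesis using transcendental_ev_div_x[of "[:\<alpha>, 0, 1:]"] assms by simp
qed

lemma quotient_given_byI:
  assumes t: "K_hom t" and t_inv_x: "t x = \<iota> \<alpha> / x" and "\<alpha> \<noteq> 0"
    and r: "r \<in> gen_subfield \<iota> {x}" "r \<noteq> 0" and t_v: "t (y * r) = y * r"
    and v_sq: "(y * r) ^ 2 = ev h (x + \<iota> \<alpha> / x)"
  shows "quotient_given_by \<iota> t h"
proof -
  define u where "u = x + \<iota> \<alpha> / x"
  define v where "v = y * r"
  have u_in: "u \<in> gen_subfield \<iota> {u, v}" by (simp add: gen_subfield.gen)
  interpret conjugation \<iota> t "{u, v}" x u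
  proof
    show "t z = z" if "z \<in> {u, v}" for z
      using that t_v x_nonzero \<open>\<alpha> \<noteq> 0\<close>
      by (auto simp: u_def v_def t_inv_x K_hom_add[OF t] K_hom_divide[OF t] K_hom_emb[OF t])
    show "x * (u - x) \<in> gen_subfield \<iota> {u, v}"
      using x_nonzero gen_subfield.const[of \<iota> \<alpha>] by (simp add: u_def)
    show "t x = u - x" by (simp add: t_inv_x u_def)
  qed (simp_all add: t u_in)
  have "{z. t z = z} = gen_subfield \<iota> {u, v}"
    using fixed_field_eq gen_subfield_x_y_mult_eq_UNIV[OF r] emb_div_x_neq_x t_inv_x
    by (simp add: v_def)
  moreover have "u \<in> gen_subfield \<iota> {x}"
    unfolding u_def
    by (intro gen_subfield.add gen_subfield_divide gen_subfield.const gen_subfield.gen) simp_all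
  ultimately show ?thesis
    unfolding quotient_given_by_def evalp_eq_ev
    using t_fixes_T t_v v_sq transcendental_x_plus_div_x[OF \<open>\<alpha> \<noteq> 0\<close>] y_mult_notin_gen_subfield[OF r]
    by (intro exI[of _ u] exI[of _ v]) (simp add: u_def v_def)
qed

end

section \<open>The involutions of the curve\<close>

lemma degree_hyp_poly:
  assumes "1 \<le> g"
  shows "degree (hyp_poly g a \<alpha>) = 2 * g + 1"
proof -
  have "degree (monom a (g + 1) + monom (\<alpha> ^ g) 1) \<le> g + 1"
    by (rule degree_add_le) (auto intro: order.trans[OF degree_monom_le])
  then have "degree (monom a (g + 1) + monom (\<alpha> ^ g) 1) < degree (monom (1::'a::field) (2 * g + 1))"
    using assms by (simp add: degree_monom_eq)
  then show ?thesis
    unfolding hyp_poly_def add.assoc by (subst degree_add_eq_left) (simp_all add: degree_monom_eq)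
qed

locale dickson_curve = hyperelliptic_ff \<iota> "hyp_poly g a \<alpha>" x y
  for \<iota> :: "'k::field \<Rightarrow> 'L::field" and g :: nat and a \<alpha> :: 'k and x y :: 'L +
  assumes genus_pos: "1 \<le> g" and alpha_nonzero: "\<alpha> \<noteq> 0"
begin

lemma ev_hyp_poly:
  assumes "z \<noteq> 0"
  shows "ev (hyp_poly g a \<alpha>) z = z ^ (g + 1) * ev (dickson g \<alpha> + [:a:]) (z + \<iota> \<alpha> / z)"
proof -
  have "ev (dickson g \<alpha>) (z + \<iota> \<alpha> / z) = z ^ g + (\<iota> \<alpha> / z) ^ g"
    using assms genus_pos by (simp add: ev_dickson poly_dickson)
  then show ?thesis
    using assms by (simp add: hyp_poly_def power_divide power_add power_mult power2_eq_square field_simps)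
qed

lemma y_sq_eq: "y ^ 2 = x ^ (g + 1) * ev (dickson g \<alpha> + [:a:]) (x + \<iota> \<alpha> / x)"
  using y_sq ev_hyp_poly x_nonzero by simp

lemma transcendental_alpha_div_x: "transcendental_over \<iota> (\<iota> \<alpha> / x)"
  using transcendental_ev_div_x[of "[:\<alpha>:]"] alpha_nonzero by simp

definition omega :: "'L \<Rightarrow> 'L" where
  "omega = subst x (- y)"

definition sigma :: "'k \<Rightarrow> 'L \<Rightarrow> 'L" where
  "sigma c = subst (\<iota> \<alpha> / x) (y * \<iota> c / x ^ (g + 1))"

lemma omega: "K_aut \<iota> omega" "omega x = x" "omega y = - y"
proof -
  have y_sq': "(- y) ^ 2 = ev (hyp_poly g a \<alpha>) x" using y_sq by simp
  show x: "omega x = x" and y: "omega y = - y"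
    unfolding omega_def using subst_x subst_y transcendental_x y_sq' by blast+
  have "omega (- y) = y"
    using K_hom_minus[OF K_hom_subst[OF transcendental_x y_sq']] y by (simp add: omega_def)
  then show "K_aut \<iota> omega"
    using subst_involution[OF transcendental_x y_sq'] x by (simp add: omega_def)
qed

context
  fixes c :: 'k
  assumes c_sq: "c ^ 2 = \<alpha> ^ (g + 1)"
begin

lemma sigma_y_sq: "(y * \<iota> c / x ^ (g + 1)) ^ 2 = ev (hyp_poly g a \<alpha>) (\<iota> \<alpha> / x)"
proof -
  have "\<iota> c ^ 2 = \<iota> \<alpha> ^ (g + 1)" using c_sq by (metis emb_power)
  then have "(y * \<iota> c / x ^ (g + 1)) ^ 2
               = x ^ (g + 1) * ev (dickson g \<alpha> + [:a:]) (x + \<iota> \<alpha> / x) * \<iota> \<alpha> ^ (g + 1) / (x ^ (g + 1)) ^ 2"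
    by (simp only: power_mult_distrib power_divide y_sq_eq)
  also have "\<dots> = (\<iota> \<alpha> / x) ^ (g + 1) * ev (dickson g \<alpha> + [:a:]) (\<iota> \<alpha> / x + \<iota> \<alpha> / (\<iota> \<alpha> / x))"
    using x_nonzero alpha_nonzero by (simp add: power_divide power2_eq_square add.commute)
  finally show ?thesis
    using x_nonzero alpha_nonzero by (simp add: ev_hyp_poly)
qed

lemma sigma: "K_aut \<iota> (sigma c)" "sigma c x = \<iota> \<alpha> / x" "sigma c y = y * \<iota> c / x ^ (g + 1)"
  "sigma c \<circ> sigma c = id"
proof -
  have K_hom: "K_hom (sigma c)"
    unfolding sigma_def by (rule K_hom_subst[OF transcendental_alpha_div_x sigma_y_sq])
  show x: "sigma c x = \<iota> \<alpha> / x" and y: "sigma c y = y * \<iota> c / x ^ (g + 1)"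
    unfolding sigma_def using subst_x subst_y transcendental_alpha_div_x sigma_y_sq by blast+
  have "sigma c (\<iota> \<alpha> / x) = x"
    using x x_nonzero alpha_nonzero
    by (simp add: K_hom_divide[OF K_hom] K_hom_emb[OF K_hom])
  have "sigma c (y * \<iota> c / x ^ (g + 1)) = sigma c y * \<iota> c / sigma c x ^ (g + 1)"
    by (simp only: K_hom_divide[OF K_hom] K_hom_mult[OF K_hom] K_hom_emb[OF K_hom]
        K_hom_power[OF K_hom])
  also have "\<dots> = y * \<iota> c ^ 2 / \<iota> \<alpha> ^ (g + 1)"
    unfolding x y using x_nonzero by (simp add: power_divide power2_eq_square)
  also have "\<dots> = y"
    using c_sq alpha_nonzero by (metis emb_power emb_eq_0_iff nonzero_mult_div_cancel_right power_not_zero)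
  finally have "sigma c (y * \<iota> c / x ^ (g + 1)) = y" .
  with \<open>sigma c (\<iota> \<alpha> / x) = x\<close> show "K_aut \<iota> (sigma c)" "sigma c \<circ> sigma c = id"
    using subst_involution[OF transcendental_alpha_div_x sigma_y_sq] by (simp_all add: sigma_def)
qed

lemma omega_sigma:
  "K_hom (omega \<circ> sigma c)" "(omega \<circ> sigma c) x = \<iota> \<alpha> / x"
  "(omega \<circ> sigma c) y = y * - (\<iota> c / x ^ (g + 1))"
proof -
  have K_hom: "K_hom omega" "K_hom (sigma c)" using omega(1) sigma(1) by (simp_all add: K_aut_iff)
  then show "K_hom (omega \<circ> sigma c)" by (rule K_hom_comp)
  show "(omega \<circ> sigma c) x = \<iota> \<alpha> / x" "(omega \<circ> sigma c) y = y * - (\<iota> c / x ^ (g + 1))"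
    using sigma(2,3) omega(2,3)
    by (simp_all add: K_hom_divide[OF K_hom(1)] K_hom_mult[OF K_hom(1)] K_hom_emb[OF K_hom(1)]
        K_hom_power[OF K_hom(1)])
qed

lemma involution_claimI:
  assumes "quotient_given_by \<iota> (sigma c) h1" and "quotient_given_by \<iota> (omega \<circ> sigma c) h2"
  shows "involution_claim \<iota> x y g \<alpha> c h1 h2"
  unfolding involution_claim_def
proof (intro exI conjI)
  show "sigma c \<noteq> id" and "sigma c \<noteq> omega"
    using sigma(2) omega(2) emb_div_x_neq_x by (metis id_apply)+
qed (use sigma omega assms in simp_all)

end

lemma quotient_twist:
  assumes t: "K_hom t" and t_x: "t x = \<iota> \<alpha> / x" and t_y: "t y = y * e" and "R \<noteq> 0"
    and twist: "e * (ev R (\<iota> \<alpha> / x) / (\<iota> \<alpha> / x) ^ m) = ev R x / x ^ m"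
    and square: "x ^ (g + 1) * (ev R x / x ^ m) ^ 2 = ev H (x + \<iota> \<alpha> / x)"
  shows "quotient_given_by \<iota> t (H * (dickson g \<alpha> + [:a:]))"
proof (rule quotient_given_byI[OF t t_x alpha_nonzero])
  show "ev R x / x ^ m \<in> gen_subfield \<iota> {x}"
    by (intro gen_subfield_divide gen_subfield_ev gen_subfield_power gen_subfield.gen) simp_all
  show "ev R x / x ^ m \<noteq> 0"
    using \<open>R \<noteq> 0\<close> ev_x_eq_0D x_nonzero by auto
  have "t (y * (ev R x / x ^ m)) = y * (e * (ev R (\<iota> \<alpha> / x) / (\<iota> \<alpha> / x) ^ m))"
    by (simp only: K_hom_mult[OF t] K_hom_divide[OF t] K_hom_power[OF t] K_hom_ev[OF t] t_x t_y
        mult.assoc)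
  then show "t (y * (ev R x / x ^ m)) = y * (ev R x / x ^ m)"
    by (simp only: twist)
  have "(y * (ev R x / x ^ m)) ^ 2
          = x ^ (g + 1) * (ev R x / x ^ m) ^ 2 * ev (dickson g \<alpha> + [:a:]) (x + \<iota> \<alpha> / x)"
    by (simp only: power_mult_distrib y_sq_eq mult_ac)
  then show "(y * (ev R x / x ^ m)) ^ 2 = ev (H * (dickson g \<alpha> + [:a:])) (x + \<iota> \<alpha> / x)"
    by (simp only: square ev_mult)
qed

lemma involution_claim_odd:
  assumes "odd g"
  shows "involution_claim \<iota> x y g \<alpha> (\<alpha> ^ ((g + 1) div 2))
           (dickson g \<alpha> + [:a:]) ([:- 4 * \<alpha>, 0, 1:] * (dickson g \<alpha> + [:a:]))"
proof -
  define k where "k = (g + 1) div 2"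
  have gk: "g + 1 = 2 * k" using assms by (simp add: k_def)
  then have c_sq: "(\<alpha> ^ k) ^ 2 = \<alpha> ^ (g + 1)" by (simp flip: power_mult add: mult.commute)
  define e where "e = \<iota> (\<alpha> ^ k) / x ^ (g + 1)"
  have pow: "x ^ (g + 1) = x ^ k * x ^ k" "x ^ (k + 1) = x ^ k * x"
    "(\<iota> \<alpha> / x) ^ k = \<iota> \<alpha> ^ k / x ^ k" "(\<iota> \<alpha> / x) ^ (k + 1) = \<iota> \<alpha> ^ k * \<iota> \<alpha> / (x ^ k * x)"
    unfolding gk by (simp_all add: power_add power_mult power2_eq_square power_divide mult_ac)
  have nz: "x ^ k \<noteq> 0" "\<iota> \<alpha> ^ k \<noteq> 0" using x_nonzero alpha_nonzero by simp_all
  have sigma_y: "sigma (\<alpha> ^ k) y = y * e" and omega_sigma_y: "(omega \<circ> sigma (\<alpha> ^ k)) y = y * - e"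
    using sigma(3)[OF c_sq] omega_sigma(3)[OF c_sq] by (simp_all add: e_def)
  have q_sigma: "quotient_given_by \<iota> (sigma (\<alpha> ^ k)) (1 * (dickson g \<alpha> + [:a:]))"
  proof (rule quotient_twist[OF _ sigma(2)[OF c_sq] sigma_y one_neq_zero])
    show "K_hom (sigma (\<alpha> ^ k))" using sigma(1)[OF c_sq] by (simp add: K_aut_iff)
    show "e * (ev 1 (\<iota> \<alpha> / x) / (\<iota> \<alpha> / x) ^ k) = ev 1 x / x ^ k"
      and "x ^ (g + 1) * (ev 1 x / x ^ k) ^ 2 = ev 1 (x + \<iota> \<alpha> / x)"
      unfolding e_def ev_1 emb_power pow using nz by (simp_all add: field_simps power2_eq_square)
  qed
  have q_omega_sigma:
    "quotient_given_by \<iota> (omega \<circ> sigma (\<alpha> ^ k)) ([:- 4 * \<alpha>, 0, 1:] * (dickson g \<alpha> + [:a:]))"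
  proof (rule quotient_twist[OF omega_sigma(1,2)[OF c_sq] omega_sigma_y])
    show "[:- \<alpha>, 0, 1:] \<noteq> 0" by simp
    show "- e * (ev [:- \<alpha>, 0, 1:] (\<iota> \<alpha> / x) / (\<iota> \<alpha> / x) ^ (k + 1))
            = ev [:- \<alpha>, 0, 1:] x / x ^ (k + 1)"
      and "x ^ (g + 1) * (ev [:- \<alpha>, 0, 1:] x / x ^ (k + 1)) ^ 2
             = ev [:- 4 * \<alpha>, 0, 1:] (x + \<iota> \<alpha> / x)"
      unfolding e_def emb_power pow using x_nonzero alpha_nonzero nz
      by (simp_all add: field_simps power2_eq_square)
  qed
  show ?thesis using involution_claimI[OF c_sq q_sigma q_omega_sigma] by (simp add: k_def)
qed

lemma involution_claim_even:
  assumes "even g" and "\<beta> ^ 2 = \<alpha>"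
  shows "involution_claim \<iota> x y g \<alpha> (\<beta> ^ (g + 1))
           ([:2 * \<beta>, 1:] * (dickson g \<alpha> + [:a:])) ([:- 2 * \<beta>, 1:] * (dickson g \<alpha> + [:a:]))"
proof -
  obtain n where gn: "g = 2 * n" using assms(1) by blast
  have c_sq: "(\<beta> ^ (g + 1)) ^ 2 = \<alpha> ^ (g + 1)"
    using assms(2) by (metis power_mult mult.commute)
  define B where "B = \<iota> \<beta>"
  define e where "e = \<iota> (\<beta> ^ (g + 1)) / x ^ (g + 1)"
  have A: "\<iota> \<alpha> = B ^ 2" using assms(2) by (metis emb_power B_def)
  have pow: "x ^ (g + 1) = x ^ n * x ^ n * x" "B ^ (g + 1) = B ^ n * B ^ n * B"
    "x ^ (n + 1) = x ^ n * x" "(B ^ 2 / x) ^ (n + 1) = B ^ n * B ^ n * B * B / (x ^ n * x)"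
    unfolding gn by (simp_all add: power_add power_mult power_divide power_mult_distrib
      power2_eq_square mult_ac)
  have nz: "x ^ n \<noteq> 0" "B ^ n \<noteq> 0" "B \<noteq> 0" using x_nonzero alpha_nonzero A by auto
  have twist: "quotient_given_by \<iota> t ([:2 * s * \<beta>, 1:] * (dickson g \<alpha> + [:a:]))"
    if "K_hom t" "t x = \<iota> \<alpha> / x" "t y = y * (\<iota> s * e)" "s * s = 1" for t s
  proof (rule quotient_twist[OF that(1-3)])
    have "\<iota> s * \<iota> s = 1" using that(4) by (metis emb_mult emb_1)
    show "\<iota> s * e * (ev [:s * \<beta>, 1:] (\<iota> \<alpha> / x) / (\<iota> \<alpha> / x) ^ (n + 1))
            = ev [:s * \<beta>, 1:] x / x ^ (n + 1)"
      and "x ^ (g + 1) * (ev [:s * \<beta>, 1:] x / x ^ (n + 1)) ^ 2 = ev [:2 * s * \<beta>, 1:] (x + \<iota> \<alpha> / x)"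
      unfolding e_def A emb_power ev_pCons emb_mult B_def[symmetric] pow
      using x_nonzero nz \<open>\<iota> s * \<iota> s = 1\<close> by (simp_all add: field_simps power2_eq_square)
  qed simp
  have "quotient_given_by \<iota> (sigma (\<beta> ^ (g + 1))) ([:2 * 1 * \<beta>, 1:] * (dickson g \<alpha> + [:a:]))"
    using sigma[OF c_sq] by (intro twist) (simp_all add: K_aut_iff e_def)
  moreover have "quotient_given_by \<iota> (omega \<circ> sigma (\<beta> ^ (g + 1)))
                   ([:2 * - 1 * \<beta>, 1:] * (dickson g \<alpha> + [:a:]))"
    using omega_sigma[OF c_sq] by (intro twist) (simp_all add: e_def)
  ultimately show ?thesis using involution_claimI[OF c_sq] by simp
qed

end

theorem theorem2:
  fixes \<iota> :: "'k::{field,finite} \<Rightarrow> 'L::field"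
    and p n g :: nat and a \<alpha> :: 'k and x y :: 'L
  assumes "prime p" and "p > 2" and "card (UNIV :: 'k set) = p ^ n"
    and "g \<ge> 2" and "coprime g p"
    and "\<alpha> \<noteq> 0"
    and "squarefree (hyp_poly g a \<alpha>)"
    and "is_hyperell_ff \<iota> (hyp_poly g a \<alpha>) x y"
  shows "(odd g \<longrightarrow>
            involution_claim \<iota> x y g \<alpha> (\<alpha> ^ ((g + 1) div 2))
              (dickson g \<alpha> + [:a:])
              ([:- 4 * \<alpha>, 0, 1:] * (dickson g \<alpha> + [:a:])))
       \<and> (even g \<longrightarrow> (\<forall>\<beta>. \<beta> ^ 2 = \<alpha> \<longrightarrow>
            involution_claim \<iota> x y g \<alpha> (\<beta> ^ (g + 1))
              ([:2 * \<beta>, 1:] * (dickson g \<alpha> + [:a:]))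
              ([:- 2 * \<beta>, 1:] * (dickson g \<alpha> + [:a:]))))"
proof -
  have "degree (hyp_poly g a \<alpha>) = 2 * g + 1"
    using \<open>g \<ge> 2\<close> by (intro degree_hyp_poly) simp
  interpret constant_field \<iota>
    using assms(8) by unfold_locales (simp add: is_hyperell_ff_def)
  interpret dickson_curve \<iota> g a \<alpha> x y
    using assms(4,6,8) \<open>degree (hyp_poly g a \<alpha>) = 2 * g + 1\<close>
    by unfold_locales (auto simp: is_hyperell_ff_def evalp_eq_ev)
  show ?thesis using involution_claim_odd involution_claim_even by blast
qed

end
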